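(* Let $\mathcal{P}_1,\mathcal{P}_2$ be plans, each with $t$ factors and blocks of size $k$, where every factor of $\mathcal{P}_j$ has level set $S_j$ ($j=1,2$), $S_1\neq S_2$, and let $\mathcal{P}=\mathcal{P}_1\cup\mathcal{P}_2$ be their union plan with level set $U=S_1\cup S_2$. Then: (a) if both $\mathcal{P}_1$ and $\mathcal{P}_2$ are POTBs, then $\mathcal{P}$ is a POTB; (b) if $\mathcal{P}_1$ and $\mathcal{P}_2$ are connected, then $\mathcal{P}$ is connected if and only if $S_1\cap S_2\neq\emptyset$.
   Context: A plan with $t$ factors on $b$ blocks of size $k$, all factors having level set $S$: a run assigns a level in $S$ to each factor; the plan is a collection of $b$ blocks, each a multiset of $k$ runs. For factors $A_i,A_j$, $N_{ij}$ is the matrix (rows/columns indexed by levels) whose $(p,q)$ entry is the number of runs with $A_i$ at $p$ and $A_j$ at $q$; $L_i$ is the (levels $\times$ blocks) matrix whose $(p,l)$ entry is the number of runs in block $l$ with $A_i$ at $p$. $A_i,A_j$ are OTB if $kN_{ij}=L_iL_j^T$; a POTB is a plan in which every pair of distinct factors is OTB. Union plan: $\mathcal{P}_1\cup\mathcal{P}_2$ is the plan whose blocks are all blocks of $\mathcal{P}_1$ together with all blocks of $\mathcal{P}_2$, regarded as a plan with $t$ factors each having level set $U=S_1\cup S_2$ (the $i$th factor of the union is at level $p$ exactly in those runs where the $i$th factor of $\mathcal{P}_1$ or of $\mathcal{P}_2$ is at level $p$). Under the additive model (response = general mean + block effect + sum of factor-level effects + error), $C_{i;\bar i}$ is the information matrix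 for the effects of the $i$th factor after eliminating the general mean, block effects and effects of all other factors; a plan whose factors have $v$ levels is connected if $\operatorname{rank}C_{i;\bar i}=v-1$ for every $i$. *)

theory Defs
  imports "Jordan_Normal_Form.DL_Rank" "HOL-Library.Multiset"
begin

text \<open>A run assigns a level to each factor (only factors with index below t matter);
  a block is a multiset of runs; a plan is a list of blocks (block l is the l-th entry).\<close>
type_synonym 'a run = "nat \<Rightarrow> 'a"
type_synonym 'a plan = "'a run multiset list"

definition plan_wf :: "nat \<Rightarrow> nat \<Rightarrow> 'a set \<Rightarrow> 'a plan \<Rightarrow> bool" where
  "plan_wf t k S P \<longleftrightarrow> finite S \<and>
     (\<forall>B\<in>set P. size B = k \<and> (\<forall>r\<in>#B. \<forall>i<t. r i \<in> S))"

definition union_plan :: "'a plan \<Rightarrow> 'a plan \<Rightarrow> 'a plan" where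
  "union_plan P1 P2 = P1 @ P2"

text \<open>Entry (p,q) of N_ij and entry (p,l) of L_i.\<close>
definition Nmat :: "'a plan \<Rightarrow> nat \<Rightarrow> nat \<Rightarrow> 'a \<Rightarrow> 'a \<Rightarrow> nat" where
  "Nmat P i j p q = sum_list (map (\<lambda>B. size (filter_mset (\<lambda>r. r i = p \<and> r j = q) B)) P)"

definition Lmat :: "'a plan \<Rightarrow> nat \<Rightarrow> 'a \<Rightarrow> nat \<Rightarrow> nat" where
  "Lmat P i p l = size (filter_mset (\<lambda>r. r i = p) (P ! l))"

text \<open>k N_ij = L_i L_j^T, entrywise over the level set S.\<close>
definition OTB :: "nat \<Rightarrow> 'a set \<Rightarrow> 'a plan \<Rightarrow> nat \<Rightarrow> nat \<Rightarrow> bool" where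
  "OTB k S P i j \<longleftrightarrow>
     (\<forall>p\<in>S. \<forall>q\<in>S. k * Nmat P i j p q = (\<Sum>l<length P. Lmat P i p l * Lmat P j q l))"

definition POTB :: "nat \<Rightarrow> nat \<Rightarrow> 'a set \<Rightarrow> 'a plan \<Rightarrow> bool" where
  "POTB t k S P \<longleftrightarrow> (\<forall>i<t. \<forall>j<t. i \<noteq> j \<longrightarrow> OTB k S P i j)"

text \<open>Experimental units (block index, run), listing each block's runs with multiplicity.\<close>
definition units :: "'a plan \<Rightarrow> (nat \<times> 'a run) list" where
  "units P = concat (map (\<lambda>l. map (\<lambda>r. (l, r)) (SOME xs. mset xs = P ! l)) [0..<length P])"

definition levs :: "'a set \<Rightarrow> 'a list" where
  "levs S = (SOME xs. distinct xs \<and> set xs = S)"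

definition fac_cols :: "'a set \<Rightarrow> 'a plan \<Rightarrow> nat \<Rightarrow> real vec list" where
  "fac_cols S P i = map (\<lambda>p. vec (length (units P))
       (\<lambda>u. if snd (units P ! u) i = p then 1 else 0)) (levs S)"

definition blk_cols :: "'a plan \<Rightarrow> real vec list" where
  "blk_cols P = map (\<lambda>l. vec (length (units P))
       (\<lambda>u. if fst (units P ! u) = l then 1 else 0)) [0..<length P]"

definition nuis_mat :: "nat \<Rightarrow> 'a set \<Rightarrow> 'a plan \<Rightarrow> nat \<Rightarrow> real mat" where
  "nuis_mat t S P i = mat_of_cols (length (units P))
     ([vec (length (units P)) (\<lambda>_. 1)] @ blk_cols P @
      concat (map (fac_cols S P) (filter (\<lambda>j. j \<noteq> i) [0..<t])))"

definition orth_proj :: "nat \<Rightarrow> real mat \<Rightarrow> real mat" where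
  "orth_proj n W = (THE Pr. Pr \<in> carrier_mat n n \<and> transpose_mat Pr = Pr \<and> Pr * W = W \<and>
       (\<exists>Y \<in> carrier_mat (dim_col W) n. Pr = W * Y))"

definition info_mat :: "nat \<Rightarrow> 'a set \<Rightarrow> 'a plan \<Rightarrow> nat \<Rightarrow> real mat" where
  "info_mat t S P i =
     (let n = length (units P); Xi = mat_of_cols n (fac_cols S P i) in
      transpose_mat Xi * (1\<^sub>m n - orth_proj n (nuis_mat t S P i)) * Xi)"

definition connected_plan :: "nat \<Rightarrow> 'a set \<Rightarrow> 'a plan \<Rightarrow> bool" where
  "connected_plan t S P \<longleftrightarrow>
     (\<forall>i<t. int (vec_space.rank (card S) (info_mat t S P i)) = int (card S) - 1)"

end

theory Submission
  imports Defs
begin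

(* Part (a): both N_ij and the products L_i L_j^T are sums over blocks, so the OTB identity for
   the union is the sum of the identities for P_1 and P_2; at levels outside its own level set a
   plan contributes zero to both sides.

   Part (b): C_i x = 0 exactly when X_i x lies in the column space W_i of mean, blocks and the
   other factors, i.e. when the level effects x of factor i are confounded with nuisance effects.
   Since C_i 1 = 0, connectedness says that only constant x are confounded. Restricting a
   confounding in the union plan to the units of P_j yields one in P_j, so x is constant on S_1
   and on S_2, hence on S_1 \<union> S_2 as soon as S_1 and S_2 meet. If they are disjoint, the indicator
   of S_1 is confounded with the indicator of the blocks of P_1. *)

definition colsp :: "'a :: field mat \<Rightarrow> 'a vec set" where
  "colsp W = {W *\<^sub>v b | b. b \<in> carrier_vec (dim_col W)}"

lemma zero_mem_colsp: "0\<^sub>v (dim_row W) \<in> colsp W"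
  unfolding colsp_def by (intro CollectI exI[of _ "0\<^sub>v (dim_col W)"]) (auto intro!: eq_vecI)

lemma add_mem_colsp:
  assumes "v \<in> colsp W" "w \<in> colsp W"
  shows "v + w \<in> colsp W"
proof -
  obtain b c where "b \<in> carrier_vec (dim_col W)" "c \<in> carrier_vec (dim_col W)"
    "v = W *\<^sub>v b" "w = W *\<^sub>v c"
    using assms unfolding colsp_def by auto
  then have "v + w = W *\<^sub>v (b + c)" "b + c \<in> carrier_vec (dim_col W)"
    by (auto simp: mult_add_distrib_mat_vec[of W "dim_row W" "dim_col W"])
  then show ?thesis unfolding colsp_def by blast
qed

lemma smult_mem_colsp:
  assumes "v \<in> colsp W"
  shows "a \<cdot>\<^sub>v v \<in> colsp W"
proof -
  obtain b where "b \<in> carrier_vec (dim_col W)" "v = W *\<^sub>v b"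
    using assms unfolding colsp_def by auto
  then have "a \<cdot>\<^sub>v v = W *\<^sub>v (a \<cdot>\<^sub>v b)" "a \<cdot>\<^sub>v b \<in> carrier_vec (dim_col W)"
    by (auto simp: mult_mat_vec[of W "dim_row W" "dim_col W"])
  then show ?thesis unfolding colsp_def by blast
qed

lemma mult_unit_vec_eq_col:
  fixes A :: "'a :: field mat"
  assumes "A \<in> carrier_mat n m" "j < m"
  shows "A *\<^sub>v unit_vec m j = col A j"
  using assms by (intro eq_vecI) (auto simp: scalar_prod_right_unit)

lemma col_mem_colsp:
  assumes "k < dim_col W"
  shows "col W k \<in> colsp W"
  unfolding colsp_def using assms mult_unit_vec_eq_col[of W "dim_row W" "dim_col W" k]
  by (intro CollectI exI[of _ "unit_vec (dim_col W) k"]) auto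

lemma mem_colsp_mat_of_cols:
  assumes "set cs \<subseteq> carrier_vec n" "c \<in> set cs"
  shows "c \<in> colsp (mat_of_cols n cs)"
proof -
  obtain k where k: "k < length cs" "c = cs ! k" using assms(2) by (metis in_set_conv_nth)
  have "cs ! k \<in> carrier_vec n" using assms(1) nth_mem[OF k(1)] by blast
  with k have "col (mat_of_cols n cs) k = c" by simp
  with k show ?thesis using col_mem_colsp[of k "mat_of_cols n cs"] by simp
qed

lemma colsp_mat_of_cols_Cons:
  assumes w: "w \<in> carrier_vec n" and cs: "set cs \<subseteq> carrier_vec n"
    and y: "y \<in> colsp (mat_of_cols n cs)"
  shows "a \<cdot>\<^sub>v w + y \<in> colsp (mat_of_cols n (w # cs))"
proof -
  interpret vec_space "TYPE('a)" n .
  obtain b where b: "b \<in> carrier_vec (length cs)" "y = mat_of_cols n cs *\<^sub>v b"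
    using y unfolding colsp_def by auto
  have dims: "\<forall>v\<in>set (w # cs). dim_vec v = n" using w cs by auto
  define c where "c i = (if i = 0 then a else b $ (i - 1))" for i
  have "vec (length cs) (c \<circ> Suc) = b" using b by (intro eq_vecI) (auto simp: c_def)
  then have "lincomb_list (c \<circ> Suc) cs = y"
    using lincomb_list_as_mat_mult[of cs "c \<circ> Suc"] dims b by auto
  then have "mat_of_cols n (w # cs) *\<^sub>v vec (Suc (length cs)) c = a \<cdot>\<^sub>v w + y"
    using lincomb_list_as_mat_mult[OF dims, of c] by (simp add: c_def)
  then show ?thesis unfolding colsp_def by (intro CollectI exI[of _ "vec (Suc (length cs)) c"]) auto
qed

lemma mat_factor_if_cols_mem_colsp:
  assumes A: "A \<in> carrier_mat n m" and B: "B \<in> carrier_mat n q"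
    and cols: "\<forall>j<m. col A j \<in> colsp B"
  shows "\<exists>Z\<in>carrier_mat q m. A = B * Z"
proof -
  have "\<forall>j<m. \<exists>z. z \<in> carrier_vec q \<and> col A j = B *\<^sub>v z"
    using cols B unfolding colsp_def by auto
  then obtain z where z: "\<And>j. j < m \<Longrightarrow> z j \<in> carrier_vec q \<and> col A j = B *\<^sub>v z j"
    by metis
  define Z where "Z = mat q m (\<lambda>(i, j). z j $ i)"
  have colZ: "col Z j = z j" if "j < m" for j
    using z[OF that] that by (intro eq_vecI) (auto simp: Z_def)
  have "A = B * Z"
  proof (intro eq_matI)
    fix i j assume "i < dim_row (B * Z)" "j < dim_col (B * Z)"
    then have ij: "i < n" "j < m" using B by (auto simp: Z_def)
    then have "A $$ (i, j) = (B *\<^sub>v z j) $ i" using A z[of j] by (metis carrier_matD index_col)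
    then show "A $$ (i, j) = (B * Z) $$ (i, j)" using ij B colZ[of j] by (simp add: Z_def)
  qed (use A B in \<open>auto simp: Z_def\<close>)
  then show ?thesis by (intro bexI[of _ Z]) (auto simp: Z_def)
qed

lemma colsp_subset_if_cols_mem_colsp:
  assumes A: "A \<in> carrier_mat n m" and B: "B \<in> carrier_mat n q"
    and cols: "\<forall>j<m. col A j \<in> colsp B"
  shows "colsp A \<subseteq> colsp B"
proof
  fix y assume "y \<in> colsp A"
  then obtain b where b: "b \<in> carrier_vec m" "y = A *\<^sub>v b" using A unfolding colsp_def by auto
  obtain Z where Z: "Z \<in> carrier_mat q m" "A = B * Z"
    using mat_factor_if_cols_mem_colsp[OF A B cols] by blast
  have "y = B *\<^sub>v (Z *\<^sub>v b)" using b Z B by simp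
  then show "y \<in> colsp B" unfolding colsp_def using B Z b by auto
qed

lemma restrict_mem_colsp:
  assumes W: "W \<in> carrier_mat n q" and W': "W' \<in> carrier_mat n' q'"
    and \<rho>: "\<forall>u<n'. \<rho> u < n"
    and cols: "\<forall>k<q. vec n' (\<lambda>u. col W k $ \<rho> u) \<in> colsp W'"
    and v: "v \<in> colsp W"
  shows "vec n' (\<lambda>u. v $ \<rho> u) \<in> colsp W'"
proof -
  define R where "R = mat n' q (\<lambda>(u, k). W $$ (\<rho> u, k))"
  have R: "R \<in> carrier_mat n' q" by (simp add: R_def)
  have "\<forall>k<q. col R k \<in> colsp W'"
  proof (intro allI impI)
    fix k assume k: "k < q"
    have "col R k = vec n' (\<lambda>u. col W k $ \<rho> u)"
      using k W \<rho> by (intro eq_vecI) (auto simp: R_def)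
    then show "col R k \<in> colsp W'" using cols k by simp
  qed
  then have RW': "colsp R \<subseteq> colsp W'" by (rule colsp_subset_if_cols_mem_colsp[OF R W'])
  obtain b where b: "b \<in> carrier_vec q" "v = W *\<^sub>v b" using v W unfolding colsp_def by auto
  have "vec n' (\<lambda>u. v $ \<rho> u) = R *\<^sub>v b"
    using b W \<rho> by (intro eq_vecI) (auto simp: R_def scalar_prod_def)
  then show ?thesis using RW' R b unfolding colsp_def by auto
qed


section \<open>Orthogonal projections\<close>

lemma symmetric_mat_scalar_prod:
  fixes P :: "'a :: comm_ring mat"
  assumes "P \<in> carrier_mat n n" "transpose_mat P = P" "x \<in> carrier_vec n" "y \<in> carrier_vec n"
  shows "(P *\<^sub>v x) \<bullet> y = x \<bullet> (P *\<^sub>v y)"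
proof -
  have "(P *\<^sub>v x) \<bullet> y = y \<bullet> (P *\<^sub>v x)" using assms by (intro comm_scalar_prod) auto
  also have "\<dots> = (transpose_mat P *\<^sub>v y) \<bullet> x"
    using assms by (subst transpose_vec_mult_scalar[of P n n]) auto
  also have "\<dots> = x \<bullet> (P *\<^sub>v y)" using assms comm_scalar_prod[of "P *\<^sub>v y" n x] by auto
  finally show ?thesis .
qed

lemma mult_mat_of_cols_if_fixes_cols:
  assumes P: "P \<in> carrier_mat n n" and cs: "set cs \<subseteq> carrier_vec n"
    and fixes_cols: "\<forall>w\<in>set cs. P *\<^sub>v w = w"
  shows "P * mat_of_cols n cs = mat_of_cols n cs"
proof (rule eq_matI)
  fix i j assume "i < dim_row (mat_of_cols n cs)" "j < dim_col (mat_of_cols n cs)"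
  then have ij: "i < n" "j < length cs" by auto
  then have "cs ! j \<in> set cs" "cs ! j \<in> carrier_vec n" using cs by auto
  then show "(P * mat_of_cols n cs) $$ (i, j) = mat_of_cols n cs $$ (i, j)"
    using P ij fixes_cols by (auto simp: mat_of_cols_index simp flip: index_mult_mat_vec)
qed (use P in auto)

lemma rank_one_update:
  fixes P :: "'a :: comm_ring mat" and c :: 'a
  assumes P: "P \<in> carrier_mat n n" "transpose_mat P = P" and r: "r \<in> carrier_vec n"
  defines "Q \<equiv> mat n n (\<lambda>(i, j). P $$ (i, j) + c * r $ i * r $ j)"
  shows "Q \<in> carrier_mat n n" "transpose_mat Q = Q"
    and "v \<in> carrier_vec n \<Longrightarrow> Q *\<^sub>v v = P *\<^sub>v v + (c * (r \<bullet> v)) \<cdot>\<^sub>v r"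
proof -
  show "Q \<in> carrier_mat n n" by (simp add: Q_def)
  show "transpose_mat Q = Q"
  proof (rule eq_matI)
    fix i j assume "i < dim_row Q" "j < dim_col Q"
    then have ij: "i < n" "j < n" by (auto simp: Q_def)
    have "P $$ (j, i) = P $$ (i, j)" using P ij by (metis carrier_matD index_transpose_mat(1))
    then show "transpose_mat Q $$ (i, j) = Q $$ (i, j)" using ij by (simp add: Q_def ac_simps)
  qed (auto simp: Q_def)
  assume v: "v \<in> carrier_vec n"
  show "Q *\<^sub>v v = P *\<^sub>v v + (c * (r \<bullet> v)) \<cdot>\<^sub>v r"
  proof (rule eq_vecI)
    fix i assume "i < dim_vec (P *\<^sub>v v + (c * (r \<bullet> v)) \<cdot>\<^sub>v r)"
    then have i: "i < n" using r by simp
    have "(Q *\<^sub>v v) $ i = (\<Sum>j<n. (P $$ (i, j) + c * r $ i * r $ j) * v $ j)"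
      using i v by (simp add: Q_def scalar_prod_def lessThan_atLeast0)
    also have "\<dots> = (\<Sum>j<n. P $$ (i, j) * v $ j) + c * (\<Sum>j<n. r $ j * v $ j) * r $ i"
      by (simp add: algebra_simps sum.distrib sum_distrib_left)
    also have "\<dots> = (P *\<^sub>v v + (c * (r \<bullet> v)) \<cdot>\<^sub>v r) $ i"
      using i v P r by (simp add: scalar_prod_def lessThan_atLeast0)
    finally show "(Q *\<^sub>v v) $ i = (P *\<^sub>v v + (c * (r \<bullet> v)) \<cdot>\<^sub>v r) $ i" .
  qed (use P r in \<open>auto simp: Q_def\<close>)
qed

text \<open>Built column by column: the residual \<open>r = w - P w\<close> of a new column is orthogonal to
  the range of the old projector, so adding \<open>r r\<^sup>T / (r \<bullet> r)\<close> projects onto the enlarged space.\<close>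
lemma projector_onto_cols_exists:
  fixes cs :: "real vec list"
  assumes "set cs \<subseteq> carrier_vec n"
  shows "\<exists>P\<in>carrier_mat n n. transpose_mat P = P \<and> (\<forall>w\<in>set cs. P *\<^sub>v w = w) \<and>
           (\<forall>v\<in>carrier_vec n. P *\<^sub>v v \<in> colsp (mat_of_cols n cs))"
  using assms
proof (induction cs)
  case Nil
  show ?case
    by (rule bexI[of _ "0\<^sub>m n n"]) (auto simp: colsp_def intro!: exI[of _ "0\<^sub>v 0"] eq_vecI)
next
  case (Cons w cs)
  then have w: "w \<in> carrier_vec n" and cs: "set cs \<subseteq> carrier_vec n" by auto
  from Cons.IH[OF cs] obtain P where P: "P \<in> carrier_mat n n" and PT: "transpose_mat P = P"
    and Pfix: "\<forall>w\<in>set cs. P *\<^sub>v w = w"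
    and Pcol: "\<forall>v\<in>carrier_vec n. P *\<^sub>v v \<in> colsp (mat_of_cols n cs)" by blast
  have PP: "P *\<^sub>v (P *\<^sub>v v) = P *\<^sub>v v" if v: "v \<in> carrier_vec n" for v
  proof -
    obtain b where "b \<in> carrier_vec (length cs)" "P *\<^sub>v v = mat_of_cols n cs *\<^sub>v b"
      using Pcol v unfolding colsp_def by auto
    then show ?thesis
      using mult_mat_of_cols_if_fixes_cols[OF P cs Pfix] P
      by (metis assoc_mult_mat_vec mat_of_cols_carrier(1))
  qed
  define r where "r = w - P *\<^sub>v w"
  have r: "r \<in> carrier_vec n" using w P by (simp add: r_def)
  have r_orth: "r \<bullet> (P *\<^sub>v u) = 0" if u: "u \<in> carrier_vec n" for u
  proof -
    have "r \<bullet> (P *\<^sub>v u) = w \<bullet> (P *\<^sub>v u) - (P *\<^sub>v w) \<bullet> (P *\<^sub>v u)"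
      unfolding r_def using w P u by (subst minus_scalar_prod_distrib) auto
    also have "(P *\<^sub>v w) \<bullet> (P *\<^sub>v u) = w \<bullet> (P *\<^sub>v u)"
      using symmetric_mat_scalar_prod[OF P PT w, of "P *\<^sub>v u"] P u PP by auto
    finally show ?thesis by simp
  qed
  have "r \<bullet> r = r \<bullet> (w - P *\<^sub>v w)" by (simp only: r_def[symmetric])
  then have rw: "r \<bullet> w = r \<bullet> r"
    using r_orth[OF w] r w P by (simp add: scalar_prod_minus_distrib)
  define c where "c = (if r \<bullet> r = 0 then 0 else 1 / (r \<bullet> r))"
  define Q where "Q = mat n n (\<lambda>(i, j). P $$ (i, j) + c * r $ i * r $ j)"
  note Q = rank_one_update[OF P PT r, where c = c, folded Q_def]
  show ?case
  proof (intro bexI[OF _ Q(1)] conjI ballI)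
    fix u assume "u \<in> set (w # cs)"
    then consider "u = w" | "u \<in> set cs" by auto
    then show "Q *\<^sub>v u = u"
    proof cases
      case 1
      have "(c * (r \<bullet> r)) \<cdot>\<^sub>v r = r"
        using r conjugate_square_eq_0_vec[OF r] by (auto simp: c_def)
      then show ?thesis using 1 Q(3)[OF w] rw w P by (auto simp: r_def)
    next
      case 2
      then have u: "u \<in> carrier_vec n" using cs by auto
      then have "r \<bullet> u = 0" using r_orth[OF u] Pfix 2 by simp
      then show ?thesis using Q(3)[OF u] Pfix 2 P u r by auto
    qed
  next
    fix v :: "real vec" assume v: "v \<in> carrier_vec n"
    define a where "a = c * (r \<bullet> v)"
    have "P *\<^sub>v v + (- a) \<cdot>\<^sub>v (P *\<^sub>v w) \<in> colsp (mat_of_cols n cs)"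
      using Pcol v w by (intro add_mem_colsp smult_mem_colsp) auto
    moreover have "Q *\<^sub>v v = a \<cdot>\<^sub>v w + (P *\<^sub>v v + (- a) \<cdot>\<^sub>v (P *\<^sub>v w))"
      using Q(3)[OF v] v w P by (intro eq_vecI) (auto simp: r_def a_def algebra_simps)
    ultimately show "Q *\<^sub>v v \<in> colsp (mat_of_cols n (w # cs))"
      using colsp_mat_of_cols_Cons[OF w cs] by simp
  qed (use Q in auto)
qed

lemma orth_proj:
  fixes W :: "real mat"
  assumes W: "W \<in> carrier_mat n q"
  shows "orth_proj n W \<in> carrier_mat n n" "transpose_mat (orth_proj n W) = orth_proj n W"
    and "orth_proj n W * W = W" "\<exists>Y \<in> carrier_mat q n. orth_proj n W = W * Y"
proof -
  let ?spec = "\<lambda>Pr. Pr \<in> carrier_mat n n \<and> transpose_mat Pr = Pr \<and> Pr * W = W \<and>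
       (\<exists>Y \<in> carrier_mat (dim_col W) n. Pr = W * Y)"
  have exists: "\<exists>Pr. ?spec Pr"
  proof -
    have cols: "set (cols W) \<subseteq> carrier_vec n" using W by (auto simp: cols_def)
    have W_cols: "mat_of_cols n (cols W) = W" using W by auto
    obtain P where P: "P \<in> carrier_mat n n" "transpose_mat P = P"
      and Pfix: "\<forall>w\<in>set (cols W). P *\<^sub>v w = w"
      and Pcol: "\<forall>v\<in>carrier_vec n. P *\<^sub>v v \<in> colsp W"
      using projector_onto_cols_exists[OF cols] unfolding W_cols by blast
    have PW: "P * W = W" using mult_mat_of_cols_if_fixes_cols[OF P(1) cols Pfix] W_cols by simp
    have "\<forall>j<n. col P j \<in> colsp W"
    proof (intro allI impI)
      fix j assume "j < n"
      then have "col P j = P *\<^sub>v unit_vec n j" using mult_unit_vec_eq_col[OF P(1)] by simp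
      then show "col P j \<in> colsp W" using Pcol by simp
    qed
    then obtain Y where "Y \<in> carrier_mat q n" "P = W * Y"
      using mat_factor_if_cols_mem_colsp[OF P(1) W] by blast
    moreover have "dim_col W = q" using W by simp
    ultimately show ?thesis using P PW by blast
  qed
  have unique: "P1 = P2" if P1: "?spec P1" and P2: "?spec P2" for P1 P2
  proof -
    obtain Y1 Y2 where Y: "Y1 \<in> carrier_mat q n" "P1 = W * Y1" "Y2 \<in> carrier_mat q n" "P2 = W * Y2"
      using P1 P2 W by auto
    have P21: "P2 * P1 = P1" and P12: "P1 * P2 = P2"
      using P1 P2 Y W by (simp_all add: assoc_mult_mat[symmetric, of _ n n W q])
    have "P2 = transpose_mat (P1 * P2)" using P2 P12 by simp
    also have "\<dots> = P2 * P1" using P1 P2 by (subst transpose_mult[of _ n n _ n]) auto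
    finally show ?thesis using P21 by simp
  qed
  have "?spec (orth_proj n W)"
    unfolding orth_proj_def by (rule theI'[of ?spec]) (use exists unique in blast)
  then show "orth_proj n W \<in> carrier_mat n n" "transpose_mat (orth_proj n W) = orth_proj n W"
    "orth_proj n W * W = W" "\<exists>Y \<in> carrier_mat q n. orth_proj n W = W * Y"
    using W by auto
qed

lemma info_form_kernel_iff:
  fixes W X :: "real mat"
  assumes W: "W \<in> carrier_mat n q" and X: "X \<in> carrier_mat n m" and x: "x \<in> carrier_vec m"
  shows "(transpose_mat X * (1\<^sub>m n - orth_proj n W) * X) *\<^sub>v x = 0\<^sub>v m \<longleftrightarrow> X *\<^sub>v x \<in> colsp W"
proof -
  let ?Pr = "orth_proj n W"
  obtain Y where Y: "Y \<in> carrier_mat q n" "?Pr = W * Y" using orth_proj(4)[OF W] by blast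
  note Pr = orth_proj(1-3)[OF W]
  have Pr_fixes: "?Pr *\<^sub>v v = v" if v: "v \<in> colsp W" for v
  proof -
    obtain b where "b \<in> carrier_vec q" "v = W *\<^sub>v b" using v W unfolding colsp_def by auto
    then show ?thesis using assoc_mult_mat_vec[OF Pr(1) W, of b] Pr(3) by simp
  qed
  have Pr_range: "?Pr *\<^sub>v v \<in> colsp W" if "v \<in> carrier_vec n" for v
  proof -
    have "?Pr *\<^sub>v v = W *\<^sub>v (Y *\<^sub>v v)" using assoc_mult_mat_vec[OF W Y(1) that] Y(2) by simp
    then show ?thesis using that W Y(1) unfolding colsp_def by auto
  qed
  define M where "M = 1\<^sub>m n - ?Pr"
  have M: "M \<in> carrier_mat n n" "transpose_mat M = M"
    using Pr transpose_minus[OF one_carrier_mat Pr(1)] unfolding M_def by auto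
  have Mv: "M *\<^sub>v v = v - ?Pr *\<^sub>v v" if "v \<in> carrier_vec n" for v
    using that Pr(1) unfolding M_def by (subst minus_mult_distrib_mat_vec[of _ n n]) auto
  have MM: "M *\<^sub>v (M *\<^sub>v v) = M *\<^sub>v v" if v: "v \<in> carrier_vec n" for v
  proof -
    have "?Pr *\<^sub>v (v - ?Pr *\<^sub>v v) = 0\<^sub>v n"
      using Pr_fixes[OF Pr_range[OF v]] Pr(1) v by (simp add: mult_minus_distrib_mat_vec)
    then show ?thesis using Mv v Pr(1) by simp
  qed
  define z where "z = X *\<^sub>v x"
  have z: "z \<in> carrier_vec n" using X x by (simp add: z_def)
  have "(transpose_mat X * M * X) *\<^sub>v x = (transpose_mat X * M) *\<^sub>v z"
    using X M x by (simp add: z_def assoc_mult_mat_vec[of _ m n _ m])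
  also have "\<dots> = transpose_mat X *\<^sub>v (M *\<^sub>v z)"
    using X M z by (simp add: assoc_mult_mat_vec[of _ m n _ n])
  finally have Cx: "(transpose_mat X * M * X) *\<^sub>v x = transpose_mat X *\<^sub>v (M *\<^sub>v z)" .
  show ?thesis
    unfolding M_def[symmetric] Cx z_def[symmetric]
  proof
    assume C0: "transpose_mat X *\<^sub>v (M *\<^sub>v z) = 0\<^sub>v m"
    have "(M *\<^sub>v z) \<bullet> (M *\<^sub>v z) = z \<bullet> (M *\<^sub>v z)"
      using symmetric_mat_scalar_prod[OF M z, of "M *\<^sub>v z"] MM[OF z] M z by simp
    also have "\<dots> = (transpose_mat X *\<^sub>v (M *\<^sub>v z)) \<bullet> x"
      using transpose_vec_mult_scalar[OF X x, of "M *\<^sub>v z"] M z x X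
      by (simp add: z_def comm_scalar_prod[of _ n])
    finally have "M *\<^sub>v z = 0\<^sub>v n"
      using C0 x M z conjugate_square_eq_0_vec[of "M *\<^sub>v z" n] by simp
    then have z0: "z - ?Pr *\<^sub>v z = 0\<^sub>v n" using Mv[OF z] by simp
    have "z = ?Pr *\<^sub>v z"
    proof (rule eq_vecI)
      fix i assume "i < dim_vec (?Pr *\<^sub>v z)"
      then have i: "i < n" using Pr(1) by simp
      have "(z - ?Pr *\<^sub>v z) $ i = 0" using z0 i by simp
      then show "z $ i = (?Pr *\<^sub>v z) $ i" using i z Pr(1) by simp
    qed (use z Pr(1) in simp)
    then show "z \<in> colsp W" using Pr_range[OF z] by simp
  next
    assume "z \<in> colsp W"
    then have "M *\<^sub>v z = 0\<^sub>v n" using Mv[OF z] Pr_fixes z by simp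
    then show "transpose_mat X *\<^sub>v (M *\<^sub>v z) = 0\<^sub>v m" using X by (intro eq_vecI) auto
  qed
qed

section \<open>Rank and kernel\<close>

lemma (in vec_space) span_eq_colsp:
  assumes "set cs \<subseteq> carrier_vec n"
  shows "span (set cs) = colsp (mat_of_cols n cs)"
proof -
  have dims: "\<forall>w\<in>set cs. dim_vec w = n" using assms by auto
  have "span (set cs) = span_list cs" using span_list_as_span[OF assms] by simp
  also have "\<dots> = colsp (mat_of_cols n cs)"
  proof
    show "span_list cs \<subseteq> colsp (mat_of_cols n cs)"
      unfolding span_list_def colsp_def using lincomb_list_as_mat_mult[OF dims] by auto
    show "colsp (mat_of_cols n cs) \<subseteq> span_list cs"
    proof
      fix y assume "y \<in> colsp (mat_of_cols n cs)"
      then obtain v where v: "v \<in> carrier_vec (length cs)" "y = mat_of_cols n cs *\<^sub>v v"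
        unfolding colsp_def by auto
      have "vec (length cs) (\<lambda>i. v $ i) = v" using v by (intro eq_vecI) auto
      then have "y = lincomb_list (\<lambda>i. v $ i) cs" using lincomb_list_as_mat_mult[OF dims] v by simp
      then show "y \<in> span_list cs" unfolding span_list_def by auto
    qed
  qed
  finally show ?thesis .
qed

lemma rank_eq_if_colsp_eq:
  fixes A B :: "'a :: field mat"
  assumes A: "A \<in> carrier_mat n m" and B: "B \<in> carrier_mat n m'" and eq: "colsp A = colsp B"
  shows "vec_space.rank n A = vec_space.rank n B"
proof -
  interpret vec_space "TYPE('a)" n .
  have "set (cols A) \<subseteq> carrier_vec n" "set (cols B) \<subseteq> carrier_vec n"
    using A B by (auto simp: cols_def)
  moreover have "mat_of_cols n (cols A) = A" "mat_of_cols n (cols B) = B"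
    using A B mat_of_cols_cols[of A] mat_of_cols_cols[of B] by auto
  ultimately have "span (set (cols A)) = span (set (cols B))"
    using span_eq_colsp[of "cols A"] span_eq_colsp[of "cols B"] eq by simp
  then show ?thesis unfolding rank_def by simp
qed

lemma mult_vec_sub_kernel:
  fixes A :: "'a :: field mat"
  assumes A: "A \<in> carrier_mat n m" and u: "u \<in> carrier_vec m" and v: "v \<in> carrier_vec m"
    and Au: "A *\<^sub>v u = 0\<^sub>v n"
  shows "A *\<^sub>v (v - c \<cdot>\<^sub>v u) = A *\<^sub>v v"
  using A u v Au by (auto simp: mult_minus_distrib_mat_vec mult_mat_vec intro!: eq_vecI)

text \<open>The columns indexed by \<open>J\<close> can be dropped without changing the column space.\<close>
lemma rank_le_if_columns_removable:
  fixes A :: "'a :: field mat"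
  assumes A: "A \<in> carrier_mat n m" and J: "J \<subseteq> {..<m}"
    and removable: "\<forall>v\<in>carrier_vec m. \<exists>v'\<in>carrier_vec m. A *\<^sub>v v = A *\<^sub>v v' \<and> (\<forall>j\<in>J. v' $ j = 0)"
  shows "vec_space.rank n A \<le> m - card J"
proof -
  define idx where "idx = filter (\<lambda>j. j \<notin> J) [0..<m]"
  have idx: "distinct idx" "set idx = {..<m} - J" by (auto simp: idx_def)
  have length_idx: "length idx = m - card J"
    using distinct_card[OF idx(1)] J by (simp add: idx(2) card_Diff_subset finite_subset)
  define B where "B = mat_of_cols n (map (col A) idx)"
  have B: "B \<in> carrier_mat n (length idx)"
    using mat_of_cols_carrier(1)[of n "map (col A) idx"] by (simp add: B_def)
  have idx_lt: "idx ! k < m" if "k < length idx" for k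
    using nth_mem[OF that] idx(2) by auto
  have col_B: "col B k = col A (idx ! k)" if "k < length idx" for k
  proof -
    have "map (col A) idx ! k \<in> carrier_vec n" using that A by (simp add: carrier_vecI)
    then show ?thesis using that unfolding B_def by simp
  qed
  have "colsp A \<subseteq> colsp B"
  proof
    fix y assume "y \<in> colsp A"
    then obtain v where v: "v \<in> carrier_vec m" "y = A *\<^sub>v v" using A unfolding colsp_def by auto
    obtain v' where v': "v' \<in> carrier_vec m" "A *\<^sub>v v = A *\<^sub>v v'" "\<forall>j\<in>J. v' $ j = 0"
      using removable v by blast
    define g where "g = vec (length idx) (\<lambda>k. v' $ (idx ! k))"
    have "A *\<^sub>v v' = B *\<^sub>v g"
    proof (rule eq_vecI)
      fix i assume "i < dim_vec (B *\<^sub>v g)"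
      then have i: "i < n" using B by simp
      have "(A *\<^sub>v v') $ i = (\<Sum>j\<in>{0..<m}. A $$ (i, j) * v' $ j)"
        using A v' i by (simp add: scalar_prod_def)
      also have "\<dots> = (\<Sum>j\<in>set idx. A $$ (i, j) * v' $ j)"
        by (rule sum.mono_neutral_right) (use idx v'(3) in auto)
      also have "\<dots> = (\<Sum>k<length idx. A $$ (i, idx ! k) * v' $ (idx ! k))"
        by (simp add: sum_list_distinct_conv_sum_set[OF idx(1), symmetric] sum_list_sum_nth
            atLeast0LessThan)
      also have "\<dots> = (B *\<^sub>v g) $ i"
        using i A B idx_lt by (auto simp: g_def scalar_prod_def atLeast0LessThan B_def
            mat_of_cols_index intro!: sum.cong)
      finally show "(A *\<^sub>v v') $ i = (B *\<^sub>v g) $ i" .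
    qed (use A B in simp)
    then show "y \<in> colsp B" unfolding colsp_def using v v'(2) B by (auto simp: g_def)
  qed
  moreover have "colsp B \<subseteq> colsp A"
    using idx A col_B col_mem_colsp[of _ A]
    by (intro colsp_subset_if_cols_mem_colsp[OF B A]) (auto dest: nth_mem)
  ultimately have "vec_space.rank n A = vec_space.rank n B"
    by (intro rank_eq_if_colsp_eq[OF A B]) auto
  also have "\<dots> \<le> m - card J" using vec_space.rank_le_nc[OF B] length_idx by simp
  finally show ?thesis .
qed

text \<open>The first \<open>m - 1\<close> columns are linearly independent.\<close>
lemma rank_ge_if_kernel_constant:
  fixes A :: "'a :: field mat"
  assumes A: "A \<in> carrier_mat n m" and m: "m \<ge> 1"
    and ker: "\<forall>x\<in>carrier_vec m. A *\<^sub>v x = 0\<^sub>v n \<longrightarrow> (\<forall>a<m. \<forall>b<m. x $ a = x $ b)"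
  shows "vec_space.rank n A \<ge> m - 1"
proof -
  interpret vec_space "TYPE('a)" n .
  define B where "B = mat_of_cols n (map (col A) [0..<m - 1])"
  have B: "B \<in> carrier_mat n (m - 1)"
    using mat_of_cols_carrier(1)[of n "map (col A) [0..<m - 1]"] by (simp add: B_def)
  have cols_B: "cols B = map (col A) [0..<m - 1]"
    unfolding B_def by (rule cols_mat_of_cols) (use A in auto)
  have col_B: "col B j = col A j" if "j < m - 1" for j
    using cols_nth[of j B] cols_B that B by simp
  have extend: "A *\<^sub>v vec m (\<lambda>j. if j < m - 1 then v $ j else 0) = B *\<^sub>v v"
    if v: "v \<in> carrier_vec (m - 1)" for v
  proof (rule eq_vecI)
    fix i assume "i < dim_vec (B *\<^sub>v v)"
    then have i: "i < n" using B by simp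
    have "(A *\<^sub>v vec m (\<lambda>j. if j < m - 1 then v $ j else 0)) $ i
        = (\<Sum>j\<in>{0..<m - 1}. A $$ (i, j) * v $ j)"
      using A i by (auto simp: scalar_prod_def if_distrib[of "(*) _"] sum.If_cases Int_def
          intro!: sum.cong)
    also have "\<dots> = (B *\<^sub>v v) $ i"
      using A B v i by (simp add: scalar_prod_def B_def mat_of_cols_index)
    finally show "(A *\<^sub>v vec m (\<lambda>j. if j < m - 1 then v $ j else 0)) $ i = (B *\<^sub>v v) $ i" .
  qed (use A B in simp)
  have kernel_B: "v = 0\<^sub>v (m - 1)" if v: "v \<in> carrier_vec (m - 1)" "B *\<^sub>v v = 0\<^sub>v n" for v
  proof (rule eq_vecI)
    fix j assume "j < dim_vec (0\<^sub>v (m - 1) :: 'a vec)"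
    then have j: "j < m - 1" by simp
    let ?x = "vec m (\<lambda>j. if j < m - 1 then v $ j else 0)"
    have "A *\<^sub>v ?x = 0\<^sub>v n" using extend[OF v(1)] v(2) by simp
    moreover have "?x \<in> carrier_vec m" "j < m" "m - 1 < m" using j m by auto
    ultimately have "?x $ j = ?x $ (m - 1)" using ker by blast
    then show "v $ j = 0\<^sub>v (m - 1) $ j" using j m by simp
  qed (use v in simp)
  have dist: "distinct (cols B)"
  proof -
    have "col A a \<noteq> col A b" if "a < m - 1" "b < m - 1" "a \<noteq> b" for a b
    proof
      assume eq: "col A a = col A b"
      have "B *\<^sub>v (unit_vec (m - 1) a - unit_vec (m - 1) b) = col A a - col A b"
        using B mult_unit_vec_eq_col[OF B that(1)] mult_unit_vec_eq_col[OF B that(2)]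
          col_B[OF that(1)] col_B[OF that(2)] by (simp add: mult_minus_distrib_mat_vec)
      also have "\<dots> = 0\<^sub>v n" unfolding eq using A by (intro eq_vecI) auto
      finally have "unit_vec (m - 1) a - unit_vec (m - 1) b = (0\<^sub>v (m - 1) :: 'a vec)"
        using kernel_B by simp
      then have "(unit_vec (m - 1) a - unit_vec (m - 1) b) $ a = (0\<^sub>v (m - 1) :: 'a vec) $ a"
        by simp
      then show False using that by simp
    qed
    then show ?thesis unfolding cols_B distinct_map by (auto simp: inj_on_def) blast
  qed
  have "lin_indpt (set (cols B))"
  proof
    assume "lin_dep (set (cols B))"
    then obtain v where "v \<in> carrier_vec (m - 1)" "v \<noteq> 0\<^sub>v (m - 1)" "B *\<^sub>v v = 0\<^sub>v n"
      using lin_depE[OF B _ dist] by blast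
    then show False using kernel_B by blast
  qed
  moreover have "set (cols B) \<subseteq> set (cols A)" using A unfolding cols_B by (auto simp: cols_def)
  ultimately have "card (set (cols B)) \<le> rank A" using rank_ge_card_indpt[OF A] by blast
  then show ?thesis using distinct_card[OF dist] B by simp
qed

lemma rank_eq_minus_one_iff_kernel_constant:
  fixes A :: "'a :: field mat"
  assumes A: "A \<in> carrier_mat m m" and m: "m \<ge> 1"
    and ones: "A *\<^sub>v vec m (\<lambda>_. 1) = 0\<^sub>v m"
  shows "vec_space.rank m A = m - 1 \<longleftrightarrow>
    (\<forall>x\<in>carrier_vec m. A *\<^sub>v x = 0\<^sub>v m \<longrightarrow> (\<forall>a<m. \<forall>b<m. x $ a = x $ b))"
proof
  assume rank: "vec_space.rank m A = m - 1"
  show "\<forall>x\<in>carrier_vec m. A *\<^sub>v x = 0\<^sub>v m \<longrightarrow> (\<forall>a<m. \<forall>b<m. x $ a = x $ b)"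
  proof (intro ballI impI allI, rule ccontr)
    fix x a b assume x: "x \<in> carrier_vec m" and Ax: "A *\<^sub>v x = 0\<^sub>v m" and a: "a < m" and b: "b < m"
      and ne: "x $ a \<noteq> x $ b"
    text \<open>Subtracting multiples of \<open>x\<close> and of the ones vector clears two coordinates.\<close>
    have "vec_space.rank m A \<le> m - card {a, b}"
    proof (rule rank_le_if_columns_removable[OF A])
      show "{a, b} \<subseteq> {..<m}" using a b by auto
      show "\<forall>v\<in>carrier_vec m. \<exists>v'\<in>carrier_vec m. A *\<^sub>v v = A *\<^sub>v v' \<and> (\<forall>j\<in>{a, b}. v' $ j = 0)"
      proof
        fix v :: "'a vec" assume v: "v \<in> carrier_vec m"
        define \<beta> where "\<beta> = (v $ a - v $ b) / (x $ a - x $ b)"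
        define \<alpha> where "\<alpha> = v $ a - \<beta> * x $ a"
        define v' where "v' = (v - \<alpha> \<cdot>\<^sub>v vec m (\<lambda>_. 1)) - \<beta> \<cdot>\<^sub>v x"
        have "A *\<^sub>v v' = A *\<^sub>v v"
          using mult_vec_sub_kernel[OF A x _ Ax] mult_vec_sub_kernel[OF A _ v ones] v
          by (simp add: v'_def)
        moreover have "v' $ a = 0" "v' $ b = 0"
          using a b v x ne by (simp_all add: v'_def \<alpha>_def \<beta>_def field_simps)
        ultimately show "\<exists>v'\<in>carrier_vec m. A *\<^sub>v v = A *\<^sub>v v' \<and> (\<forall>j\<in>{a, b}. v' $ j = 0)"
          using v x by (intro bexI[of _ v']) (auto simp: v'_def)
      qed
    qed
    then show False using rank a b ne by (cases "a = b") auto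
  qed
next
  assume "\<forall>x\<in>carrier_vec m. A *\<^sub>v x = 0\<^sub>v m \<longrightarrow> (\<forall>a<m. \<forall>b<m. x $ a = x $ b)"
  then have "vec_space.rank m A \<ge> m - 1" by (rule rank_ge_if_kernel_constant[OF A m])
  moreover have "vec_space.rank m A \<le> m - card {m - 1}"
  proof (rule rank_le_if_columns_removable[OF A])
    show "{m - 1} \<subseteq> {..<m}" using m by auto
    show "\<forall>v\<in>carrier_vec m. \<exists>v'\<in>carrier_vec m. A *\<^sub>v v = A *\<^sub>v v' \<and> (\<forall>j\<in>{m - 1}. v' $ j = 0)"
    proof
      fix v :: "'a vec" assume v: "v \<in> carrier_vec m"
      define v' where "v' = v - (v $ (m - 1)) \<cdot>\<^sub>v vec m (\<lambda>_. 1)"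
      have "A *\<^sub>v v' = A *\<^sub>v v" unfolding v'_def by (rule mult_vec_sub_kernel[OF A _ v ones]) simp
      then show "\<exists>v'\<in>carrier_vec m. A *\<^sub>v v = A *\<^sub>v v' \<and> (\<forall>j\<in>{m - 1}. v' $ j = 0)"
        using v m by (intro bexI[of _ v']) (auto simp: v'_def)
    qed
  qed
  ultimately show "vec_space.rank m A = m - 1" by simp
qed

definition levels_within :: "nat \<Rightarrow> 'a set \<Rightarrow> 'a plan \<Rightarrow> bool" where
  "levels_within t S P \<longleftrightarrow> finite S \<and> (\<forall>B\<in>set P. \<forall>r\<in>#B. \<forall>i<t. r i \<in> S)"

lemma levels_within_if_plan_wf: "plan_wf t k S P \<Longrightarrow> levels_within t S P"
  unfolding plan_wf_def levels_within_def by auto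

lemma levels_within_append:
  "levels_within t S1 P1 \<Longrightarrow> levels_within t S2 P2 \<Longrightarrow> levels_within t (S1 \<union> S2) (P1 @ P2)"
  unfolding levels_within_def by auto

lemma levs:
  assumes "finite S"
  shows distinct_levs: "distinct (levs S)" and set_levs: "set (levs S) = S"
    and length_levs: "length (levs S) = card S"
proof -
  have "distinct (levs S) \<and> set (levs S) = S"
    unfolding levs_def by (rule someI_ex) (use finite_distinct_list[OF assms] in blast)
  then show "distinct (levs S)" "set (levs S) = S" "length (levs S) = card S"
    using distinct_card by fastforce+
qed

lemma sum_over_levs:
  assumes "finite S"
  shows "(\<Sum>p\<in>S. h p) = (\<Sum>j<card S. h (levs S ! j))"
  using levs[OF assms] sum_list_distinct_conv_sum_set[of "levs S" h]
    sum_list_sum_nth[of "map h (levs S)"]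
  by (simp add: atLeast0LessThan)

lemma set_units: "set (units P) = {(l, r). l < length P \<and> r \<in># P ! l}"
proof -
  have "set (SOME xs. mset xs = P ! l) = set_mset (P ! l)" for l
    using someI_ex[OF ex_mset, of "P ! l"] by (metis set_mset_mset)
  then show ?thesis unfolding units_def by auto
qed

lemma units_nth:
  assumes "u < length (units P)"
  shows "fst (units P ! u) < length P" "snd (units P ! u) \<in># P ! fst (units P ! u)"
  using nth_mem[OF assms] unfolding set_units by auto

lemma units_nth_level:
  "levels_within t S P \<Longrightarrow> u < length (units P) \<Longrightarrow> i < t \<Longrightarrow> snd (units P ! u) i \<in> S"
  using units_nth unfolding levels_within_def by (meson nth_mem)

lemma units_append:
  "units (P1 @ P2) = units P1 @ map (\<lambda>(l, r). (l + length P1, r)) (units P2)"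
proof -
  let ?blk = "\<lambda>P l. map (Pair l) (SOME xs. mset xs = P ! l)"
  have split: "[0..<length (P1 @ P2)] = [0..<length P1] @ map (\<lambda>l. l + length P1) [0..<length P2]"
    by (simp add: upt_add_eq_append[of 0] map_add_upt add.commute)
  have first: "map (?blk (P1 @ P2)) [0..<length P1] = map (?blk P1) [0..<length P1]"
    by (rule map_cong) (auto simp: nth_append)
  have second: "map (?blk (P1 @ P2)) (map (\<lambda>l. l + length P1) [0..<length P2]) =
      map (map (\<lambda>(l, r). (l + length P1, r)) \<circ> ?blk P2) [0..<length P2]"
    by (simp add: nth_append o_def)
  show ?thesis
    unfolding units_def split map_append concat_append first second by (simp add: map_concat)
qed

lemma length_units_append: "length (units (P1 @ P2)) = length (units P1) + length (units P2)"
  by (simp add: units_append)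

lemma units_append_nth:
  "u < length (units P1) \<Longrightarrow> units (P1 @ P2) ! u = units P1 ! u"
  "u < length (units P2) \<Longrightarrow>
    units (P1 @ P2) ! (length (units P1) + u) = (fst (units P2 ! u) + length P1, snd (units P2 ! u))"
  by (simp_all add: units_append nth_append case_prod_beta)

text \<open>Vectors indexed by the units of a plan: \<open>factor_effect_vec P i f\<close> is \<open>X\<^sub>i f\<close> for
  level effects \<open>f\<close> of factor \<open>i\<close>, and \<open>block_effect_vec\<close> is its analogue for block effects.\<close>
definition block_effect_vec :: "'a plan \<Rightarrow> (nat \<Rightarrow> real) \<Rightarrow> real vec" where
  "block_effect_vec P g = vec (length (units P)) (\<lambda>u. g (fst (units P ! u)))"

definition factor_effect_vec :: "'a plan \<Rightarrow> nat \<Rightarrow> ('a \<Rightarrow> real) \<Rightarrow> real vec" where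
  "factor_effect_vec P i f = vec (length (units P)) (\<lambda>u. f (snd (units P ! u) i))"

lemma nuis_mat_carrier:
  "nuis_mat t S P i \<in> carrier_mat (length (units P)) (dim_col (nuis_mat t S P i))"
  by (intro carrier_matI) (simp_all add: nuis_mat_def)

lemma mem_colsp_nuis_mat:
  assumes "c \<in> set ([vec (length (units P)) (\<lambda>_. 1)] @ blk_cols P @
      concat (map (fac_cols S P) (filter (\<lambda>j. j \<noteq> i) [0..<t])))"
  shows "c \<in> colsp (nuis_mat t S P i)"
  unfolding nuis_mat_def
  by (rule mem_colsp_mat_of_cols[OF _ assms]) (auto simp: blk_cols_def fac_cols_def)

lemma col_nuis_mat_cases:
  assumes "k < dim_col (nuis_mat t S P i)"
  obtains (ones) "col (nuis_mat t S P i) k = block_effect_vec P (\<lambda>_. 1)"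
  | (block) l where "col (nuis_mat t S P i) k = block_effect_vec P (\<lambda>l'. if l' = l then 1 else 0)"
  | (factor) j p where "j < t" "j \<noteq> i"
      "col (nuis_mat t S P i) k = factor_effect_vec P j (\<lambda>q. if q = p then 1 else 0)"
proof -
  let ?cs = "[vec (length (units P)) (\<lambda>_. 1)] @ blk_cols P @
      concat (map (fac_cols S P) (filter (\<lambda>j. j \<noteq> i) [0..<t]))"
  have k: "k < length ?cs" using assms by (simp add: nuis_mat_def)
  have "?cs ! k \<in> set ?cs" "?cs ! k \<in> carrier_vec (length (units P))"
    using nth_mem[OF k] by (auto simp: blk_cols_def fac_cols_def)
  moreover have "col (nuis_mat t S P i) k = ?cs ! k"
    using k calculation(2) unfolding nuis_mat_def by simp
  ultimately show ?thesis using that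
    by (auto simp: blk_cols_def fac_cols_def block_effect_vec_def factor_effect_vec_def)
qed

lemma block_indicator_mem_colsp_nuis_mat:
  "block_effect_vec P (\<lambda>l'. if l' = l then 1 else 0) \<in> colsp (nuis_mat t S P i)"
proof (cases "l < length P")
  case True
  then show ?thesis by (intro mem_colsp_nuis_mat) (auto simp: blk_cols_def block_effect_vec_def)
next
  case False
  then have "block_effect_vec P (\<lambda>l'. if l' = l then 1 else 0) = 0\<^sub>v (dim_row (nuis_mat t S P i))"
    using units_nth(1) by (intro eq_vecI) (auto simp: block_effect_vec_def nuis_mat_def)
  then show ?thesis using zero_mem_colsp by metis
qed

lemma block_effect_vec_mem_colsp_nuis_mat: "block_effect_vec P g \<in> colsp (nuis_mat t S P i)"
proof -
  let ?part = "\<lambda>K. block_effect_vec P (\<lambda>l. if l < K then g l else 0)"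
  have "?part K \<in> colsp (nuis_mat t S P i)" for K
  proof (induction K)
    case 0
    have "?part 0 = 0\<^sub>v (dim_row (nuis_mat t S P i))"
      by (intro eq_vecI) (auto simp: block_effect_vec_def nuis_mat_def)
    then show ?case using zero_mem_colsp by metis
  next
    case (Suc K)
    let ?ind = "block_effect_vec P (\<lambda>l'. if l' = K then 1 else 0)"
    have "?ind \<in> colsp (nuis_mat t S P i)" by (rule block_indicator_mem_colsp_nuis_mat)
    moreover have "?part (Suc K) = ?part K + g K \<cdot>\<^sub>v ?ind"
      by (intro eq_vecI) (auto simp: block_effect_vec_def less_Suc_eq)
    ultimately show ?case using Suc.IH by (simp add: add_mem_colsp smult_mem_colsp)
  qed
  moreover have "?part (length P) = block_effect_vec P g"
    using units_nth(1) by (intro eq_vecI) (auto simp: block_effect_vec_def)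
  ultimately show ?thesis by metis
qed

lemma factor_indicator_mem_colsp_nuis_mat:
  assumes P: "levels_within t S P" and j: "j < t" "j \<noteq> i"
  shows "factor_effect_vec P j (\<lambda>q. if q = p then 1 else 0) \<in> colsp (nuis_mat t S P i)"
proof (cases "p \<in> S")
  case True
  then have "p \<in> set (levs S)" using set_levs P by (auto simp: levels_within_def)
  then show ?thesis
    using j by (intro mem_colsp_nuis_mat) (auto simp: fac_cols_def factor_effect_vec_def)
next
  case False
  then have "factor_effect_vec P j (\<lambda>q. if q = p then 1 else 0) = 0\<^sub>v (dim_row (nuis_mat t S P i))"
    using units_nth_level[OF P _ j(1)] by (intro eq_vecI) (auto simp: factor_effect_vec_def nuis_mat_def)
  then show ?thesis using zero_mem_colsp by metis
qed

lemma restrict_mem_colsp_nuis_mat: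
  assumes P: "levels_within t S P"
    and emb: "\<forall>u<length (units P). \<rho> u < length (units Q) \<and>
                units Q ! \<rho> u = (fst (units P ! u) + d, snd (units P ! u))"
    and v: "v \<in> colsp (nuis_mat t U Q i)"
  shows "vec (length (units P)) (\<lambda>u. v $ \<rho> u) \<in> colsp (nuis_mat t S P i)"
proof (rule restrict_mem_colsp[OF nuis_mat_carrier nuis_mat_carrier _ _ v])
  show "\<forall>u<length (units P). \<rho> u < length (units Q)" using emb by blast
  have block: "vec (length (units P)) (\<lambda>u. block_effect_vec Q g $ \<rho> u) = block_effect_vec P (\<lambda>l. g (l + d))"
    for g using emb by (intro eq_vecI) (auto simp: block_effect_vec_def)
  have factor: "vec (length (units P)) (\<lambda>u. factor_effect_vec Q j f $ \<rho> u) = factor_effect_vec P j f"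
    for j f using emb by (intro eq_vecI) (auto simp: factor_effect_vec_def)
  show "\<forall>k<dim_col (nuis_mat t U Q i).
      vec (length (units P)) (\<lambda>u. col (nuis_mat t U Q i) k $ \<rho> u) \<in> colsp (nuis_mat t S P i)"
  proof (intro allI impI)
    fix k assume "k < dim_col (nuis_mat t U Q i)"
    then show "vec (length (units P)) (\<lambda>u. col (nuis_mat t U Q i) k $ \<rho> u) \<in> colsp (nuis_mat t S P i)"
      by (cases rule: col_nuis_mat_cases)
        (simp_all add: block factor block_effect_vec_mem_colsp_nuis_mat
          block_indicator_mem_colsp_nuis_mat factor_indicator_mem_colsp_nuis_mat[OF P])
  qed
qed

section \<open>Connectedness in terms of level effects\<close>

lemma fac_cols_carrier:
  assumes "finite S"
  shows "mat_of_cols (length (units P)) (fac_cols S P i) \<in> carrier_mat (length (units P)) (card S)"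
  using mat_of_cols_carrier(1)[of "length (units P)" "fac_cols S P i"] length_levs[OF assms]
  by (simp add: fac_cols_def)

lemma fac_cols_mult_vec:
  assumes P: "levels_within t S P" and i: "i < t"
  shows "mat_of_cols (length (units P)) (fac_cols S P i) *\<^sub>v vec (card S) (\<lambda>j. f (levs S ! j))
    = factor_effect_vec P i f"
proof (rule eq_vecI)
  have fin: "finite S" using P by (simp add: levels_within_def)
  let ?X = "mat_of_cols (length (units P)) (fac_cols S P i)"
  fix u assume "u < dim_vec (factor_effect_vec P i f)"
  then have u: "u < length (units P)" by (simp add: factor_effect_vec_def)
  let ?r = "snd (units P ! u) i"
  have X: "?X $$ (u, j) = (if ?r = levs S ! j then 1 else 0)" if "j < card S" for j
    using u that length_levs[OF fin] by (simp add: fac_cols_def mat_of_cols_index)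
  have "(?X *\<^sub>v vec (card S) (\<lambda>j. f (levs S ! j))) $ u = (\<Sum>j<card S. ?X $$ (u, j) * f (levs S ! j))"
    using u fac_cols_carrier[OF fin, of P i] by (auto simp: scalar_prod_def atLeast0LessThan)
  also have "\<dots> = (\<Sum>j<card S. (\<lambda>p. if ?r = p then f p else 0) (levs S ! j))"
    using X by (intro sum.cong) auto
  also have "\<dots> = (\<Sum>p\<in>S. if ?r = p then f p else 0)"
    by (rule sum_over_levs[OF fin, symmetric])
  also have "\<dots> = f ?r" using units_nth_level[OF P u i] fin by simp
  finally show "(?X *\<^sub>v vec (card S) (\<lambda>j. f (levs S ! j))) $ u = factor_effect_vec P i f $ u"
    using u by (simp add: factor_effect_vec_def)
qed (simp add: factor_effect_vec_def)

lemma info_mat_carrier: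
  assumes "finite S"
  shows "info_mat t S P i \<in> carrier_mat (card S) (card S)"
proof -
  let ?n = "length (units P)" and ?X = "mat_of_cols (length (units P)) (fac_cols S P i)"
  have X: "?X \<in> carrier_mat ?n (card S)" by (rule fac_cols_carrier[OF assms])
  have "1\<^sub>m ?n - orth_proj ?n (nuis_mat t S P i) \<in> carrier_mat ?n ?n"
    using orth_proj(1)[OF nuis_mat_carrier] by (rule minus_carrier_mat)
  then have "transpose_mat ?X * (1\<^sub>m ?n - orth_proj ?n (nuis_mat t S P i)) \<in> carrier_mat (card S) ?n"
    using X by (intro mult_carrier_mat[of _ _ ?n]) auto
  then show ?thesis unfolding info_mat_def Let_def using X by (rule mult_carrier_mat)
qed

lemma info_mat_kernel_iff:
  assumes P: "levels_within t S P" and i: "i < t"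
  shows "info_mat t S P i *\<^sub>v vec (card S) (\<lambda>j. f (levs S ! j)) = 0\<^sub>v (card S)
    \<longleftrightarrow> factor_effect_vec P i f \<in> colsp (nuis_mat t S P i)"
proof -
  have "finite S" using P by (simp add: levels_within_def)
  from info_form_kernel_iff[OF nuis_mat_carrier[of t S P i] fac_cols_carrier[OF this, of P i],
      where x = "vec (card S) (\<lambda>j. f (levs S ! j))"]
  show ?thesis unfolding info_mat_def Let_def fac_cols_mult_vec[OF P i] by simp
qed

lemma ball_carrier_vec_levels_iff:
  assumes "finite S"
  shows "(\<forall>x\<in>carrier_vec (card S). Q x) \<longleftrightarrow> (\<forall>f. Q (vec (card S) (\<lambda>j. f (levs S ! j))))"
proof (intro iffI allI ballI)
  fix x :: "'b vec" assume Q: "\<forall>f. Q (vec (card S) (\<lambda>j. f (levs S ! j)))" and x: "x \<in> carrier_vec (card S)"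
  have inj: "inj_on ((!) (levs S)) {..<card S}" using levs[OF assms] by (simp add: inj_on_nth)
  define g where "g p = x $ the_inv_into {..<card S} ((!) (levs S)) p" for p
  have "vec (card S) (\<lambda>j. g (levs S ! j)) = x"
    using x the_inv_into_f_f[OF inj] by (intro eq_vecI) (auto simp: g_def)
  then show "Q x" using Q[rule_format, of g] by simp
qed auto

lemma levs_constant_iff:
  assumes "finite S"
  shows "(\<forall>a<card S. \<forall>b<card S. f (levs S ! a) = f (levs S ! b)) \<longleftrightarrow> (\<forall>p\<in>S. \<forall>q\<in>S. f p = f q)"
proof
  have index: "\<exists>a<card S. levs S ! a = p" if "p \<in> S" for p
    using that levs[OF assms] by (metis in_set_conv_nth)
  assume const: "\<forall>a<card S. \<forall>b<card S. f (levs S ! a) = f (levs S ! b)"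
  show "\<forall>p\<in>S. \<forall>q\<in>S. f p = f q"
  proof (intro ballI)
    fix p q assume "p \<in> S" "q \<in> S"
    then obtain a b where "a < card S" "levs S ! a = p" "b < card S" "levs S ! b = q"
      using index by blast
    then show "f p = f q" using const by blast
  qed
qed (use levs[OF assms] nth_mem in metis)

text \<open>Ranks are compared in \<open>int\<close>, so with \<open>t \<ge> 1\<close> an empty level set is never connected.\<close>
lemma connected_plan_iff:
  assumes P: "levels_within t S P" and t: "t \<ge> 1"
  shows "connected_plan t S P \<longleftrightarrow> S \<noteq> {} \<and>
    (\<forall>i<t. \<forall>f. factor_effect_vec P i f \<in> colsp (nuis_mat t S P i) \<longrightarrow> (\<forall>p\<in>S. \<forall>q\<in>S. f p = f q))"
proof (cases "S = {}")
  case True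
  then show ?thesis using t unfolding connected_plan_def by (auto intro!: exI[of _ 0])
next
  case False
  have fin: "finite S" using P by (simp add: levels_within_def)
  then have card: "card S \<ge> 1" using False by (simp add: Suc_le_eq card_gt_0_iff)
  have "vec_space.rank (card S) (info_mat t S P i) = card S - 1 \<longleftrightarrow>
      (\<forall>f. factor_effect_vec P i f \<in> colsp (nuis_mat t S P i) \<longrightarrow> (\<forall>p\<in>S. \<forall>q\<in>S. f p = f q))"
    if i: "i < t" for i
  proof -
    have "factor_effect_vec P i (\<lambda>_. 1) \<in> colsp (nuis_mat t S P i)"
      using block_effect_vec_mem_colsp_nuis_mat[of P "\<lambda>_. 1"]
      by (simp add: block_effect_vec_def factor_effect_vec_def)
    then have "info_mat t S P i *\<^sub>v vec (card S) (\<lambda>_. 1) = 0\<^sub>v (card S)"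
      using info_mat_kernel_iff[OF P i, of "\<lambda>_. 1"] by simp
    from rank_eq_minus_one_iff_kernel_constant[OF info_mat_carrier[OF fin] card this]
    show ?thesis
      unfolding ball_carrier_vec_levels_iff[OF fin] info_mat_kernel_iff[OF P i]
      by (simp add: levs_constant_iff[OF fin])
  qed
  moreover have "int r = int (card S) - 1 \<longleftrightarrow> r = card S - 1" for r using card by linarith
  ultimately show ?thesis using False unfolding connected_plan_def by simp
qed

lemma factor_effect_vec_restrict_append:
  assumes P1: "levels_within t S1 P1" and P2: "levels_within t S2 P2"
    and in_colsp: "factor_effect_vec (P1 @ P2) i f \<in> colsp (nuis_mat t U (P1 @ P2) i)"
  shows "factor_effect_vec P1 i f \<in> colsp (nuis_mat t S1 P1 i)"
    and "factor_effect_vec P2 i f \<in> colsp (nuis_mat t S2 P2 i)"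
proof -
  let ?n1 = "length (units P1)" and ?n2 = "length (units P2)"
  have "vec ?n1 (\<lambda>u. factor_effect_vec (P1 @ P2) i f $ u) \<in> colsp (nuis_mat t S1 P1 i)"
    by (rule restrict_mem_colsp_nuis_mat[OF P1 _ in_colsp, where d = 0])
      (simp add: units_append_nth length_units_append)
  moreover have "vec ?n1 (\<lambda>u. factor_effect_vec (P1 @ P2) i f $ u) = factor_effect_vec P1 i f"
    by (intro eq_vecI) (auto simp: factor_effect_vec_def units_append_nth length_units_append)
  ultimately show "factor_effect_vec P1 i f \<in> colsp (nuis_mat t S1 P1 i)" by simp
  have "vec ?n2 (\<lambda>u. factor_effect_vec (P1 @ P2) i f $ (?n1 + u)) \<in> colsp (nuis_mat t S2 P2 i)"
    by (rule restrict_mem_colsp_nuis_mat[OF P2 _ in_colsp, where d = "length P1"])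
      (simp add: units_append_nth length_units_append)
  moreover have "vec ?n2 (\<lambda>u. factor_effect_vec (P1 @ P2) i f $ (?n1 + u)) = factor_effect_vec P2 i f"
    by (intro eq_vecI) (auto simp: factor_effect_vec_def units_append_nth length_units_append)
  ultimately show "factor_effect_vec P2 i f \<in> colsp (nuis_mat t S2 P2 i)" by simp
qed

lemma factor_effect_vec_append_disjoint:
  assumes P1: "levels_within t S1 P1" and P2: "levels_within t S2 P2"
    and disj: "S1 \<inter> S2 = {}" and i: "i < t"
  shows "factor_effect_vec (P1 @ P2) i (\<lambda>p. if p \<in> S1 then 1 else 0)
    = block_effect_vec (P1 @ P2) (\<lambda>l. if l < length P1 then 1 else 0)"
proof (rule eq_vecI)
  fix u assume "u < dim_vec (block_effect_vec (P1 @ P2) (\<lambda>l. if l < length P1 then 1 else 0))"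
  then have u: "u < length (units P1) + length (units P2)"
    by (simp add: block_effect_vec_def length_units_append)
  show "factor_effect_vec (P1 @ P2) i (\<lambda>p. if p \<in> S1 then 1 else 0) $ u
      = block_effect_vec (P1 @ P2) (\<lambda>l. if l < length P1 then 1 else 0) $ u"
  proof (cases "u < length (units P1)")
    case True
    then show ?thesis using units_nth_level[OF P1 _ i] units_nth(1)[of u P1]
      by (simp add: factor_effect_vec_def block_effect_vec_def units_append_nth length_units_append)
  next
    case False
    then obtain v where v: "v < length (units P2)" "u = length (units P1) + v"
      using u by (metis add_diff_inverse_nat nat_add_left_cancel_less)
    then have "snd (units P2 ! v) i \<notin> S1" using units_nth_level[OF P2 v(1) i] disj by blast
    then show ?thesis using v
      by (simp add: factor_effect_vec_def block_effect_vec_def units_append_nth length_units_append)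
  qed
qed (simp add: factor_effect_vec_def block_effect_vec_def)

lemma connected_plan_append_iff:
  assumes t: "t \<ge> 1" and P1: "levels_within t S1 P1" and P2: "levels_within t S2 P2"
    and conn1: "connected_plan t S1 P1" and conn2: "connected_plan t S2 P2"
  shows "connected_plan t (S1 \<union> S2) (P1 @ P2) \<longleftrightarrow> S1 \<inter> S2 \<noteq> {}"
proof -
  note conn1 = conn1[unfolded connected_plan_iff[OF P1 t]]
  note conn2 = conn2[unfolded connected_plan_iff[OF P2 t]]
  show ?thesis
    unfolding connected_plan_iff[OF levels_within_append[OF P1 P2] t]
  proof (intro iffI conjI allI impI ballI)
    assume "S1 \<union> S2 \<noteq> {} \<and> (\<forall>i<t. \<forall>f. factor_effect_vec (P1 @ P2) i f
      \<in> colsp (nuis_mat t (S1 \<union> S2) (P1 @ P2) i) \<longrightarrow> (\<forall>p\<in>S1 \<union> S2. \<forall>q\<in>S1 \<union> S2. f p = f q))"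
    then have conn: "\<forall>i<t. \<forall>f. factor_effect_vec (P1 @ P2) i f \<in> colsp (nuis_mat t (S1 \<union> S2) (P1 @ P2) i)
        \<longrightarrow> (\<forall>p\<in>S1 \<union> S2. \<forall>q\<in>S1 \<union> S2. f p = f q)" by blast
    show "S1 \<inter> S2 \<noteq> {}"
    proof
      assume disj: "S1 \<inter> S2 = {}"
      let ?f = "\<lambda>p. if p \<in> S1 then 1 else 0 :: real"
      have "factor_effect_vec (P1 @ P2) 0 ?f \<in> colsp (nuis_mat t (S1 \<union> S2) (P1 @ P2) 0)"
        using factor_effect_vec_append_disjoint[OF P1 P2 disj] t block_effect_vec_mem_colsp_nuis_mat
        by simp
      moreover obtain p q where "p \<in> S1" "q \<in> S2" using conn1 conn2 by blast
      ultimately have "?f p = ?f q" using conn[rule_format, of 0 ?f p q] t by simp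
      then show False using \<open>p \<in> S1\<close> \<open>q \<in> S2\<close> disj by (auto split: if_splits)
    qed
  next
    assume "S1 \<inter> S2 \<noteq> {}"
    then obtain p0 where p0: "p0 \<in> S1" "p0 \<in> S2" by blast
    then show "S1 \<union> S2 \<noteq> {}" by blast
    fix i f p q assume i: "i < t"
      and "factor_effect_vec (P1 @ P2) i f \<in> colsp (nuis_mat t (S1 \<union> S2) (P1 @ P2) i)"
      and pq: "p \<in> S1 \<union> S2" "q \<in> S1 \<union> S2"
    then have "\<forall>p\<in>S1. \<forall>q\<in>S1. f p = f q" "\<forall>p\<in>S2. \<forall>q\<in>S2. f p = f q"
      using conn1 conn2 factor_effect_vec_restrict_append[OF P1 P2] by blast+
    then show "f p = f q" using p0 pq by (metis Un_iff)
  qed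
qed

section \<open>Orthogonality of the union plan\<close>

lemma Nmat_append: "Nmat (P1 @ P2) i j p q = Nmat P1 i j p q + Nmat P2 i j p q"
  unfolding Nmat_def by simp

lemma Lmat_append:
  "l < length P1 \<Longrightarrow> Lmat (P1 @ P2) i p l = Lmat P1 i p l"
  "Lmat (P1 @ P2) i p (length P1 + l) = Lmat P2 i p l"
  unfolding Lmat_def by (simp_all add: nth_append)

text \<open>Levels outside \<open>S\<close> never occur, so both sides of the OTB identity vanish there.\<close>
lemma OTB_all_levels:
  assumes P: "levels_within t S P" and ij: "i < t" "j < t" and OTB: "OTB k S P i j"
  shows "k * Nmat P i j p q = (\<Sum>l<length P. Lmat P i p l * Lmat P j q l)"
proof (cases "p \<in> S \<and> q \<in> S")
  case True
  then show ?thesis using OTB unfolding OTB_def by blast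
next
  case False
  then have "Nmat P i j p q = 0"
    using P ij unfolding levels_within_def Nmat_def by (auto simp: sum_list_eq_0_iff size_eq_0_iff_empty)
  moreover have "Lmat P i p l = 0 \<or> Lmat P j q l = 0" if "l < length P" for l
    using False P ij nth_mem[OF that] unfolding levels_within_def Lmat_def
    by (auto simp: size_eq_0_iff_empty)
  ultimately show ?thesis by simp
qed

lemma POTB_append:
  assumes P1: "levels_within t S1 P1" and P2: "levels_within t S2 P2"
    and OTB1: "POTB t k S1 P1" and OTB2: "POTB t k S2 P2"
  shows "POTB t k (S1 \<union> S2) (P1 @ P2)"
  unfolding POTB_def OTB_def
proof (intro allI impI ballI)
  fix i j p q assume ij: "i < t" "j < t" "i \<noteq> j"
  let ?L = "\<lambda>l. Lmat (P1 @ P2) i p l * Lmat (P1 @ P2) j q l"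
  have "k * Nmat (P1 @ P2) i j p q = k * Nmat P1 i j p q + k * Nmat P2 i j p q"
    by (simp add: Nmat_append algebra_simps)
  also have "\<dots> = (\<Sum>l<length P1. ?L l) + (\<Sum>l<length P2. ?L (length P1 + l))"
    using OTB_all_levels[OF P1 ij(1,2)] OTB_all_levels[OF P2 ij(1,2)] OTB1 OTB2 ij
    unfolding POTB_def by (simp add: Lmat_append)
  also have "\<dots> = (\<Sum>l<length (P1 @ P2). ?L l)"
    using sum.atLeastLessThan_concat[of 0 "length P1" "length P1 + length P2" ?L]
      sum.atLeastLessThan_shift_0[of ?L "length P1" "length P1 + length P2"]
    by (simp add: lessThan_atLeast0 o_def)
  finally show "k * Nmat (P1 @ P2) i j p q = (\<Sum>l<length (P1 @ P2). ?L l)" .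
qed

theorem lemma4p2:
  fixes P1 P2 :: "'a plan" and S1 S2 :: "'a set" and t k :: nat
  assumes "t \<ge> 1"
    and wf1: "plan_wf t k S1 P1" and wf2: "plan_wf t k S2 P2"
    and "S1 \<noteq> S2"
  shows "(POTB t k S1 P1 \<and> POTB t k S2 P2 \<longrightarrow> POTB t k (S1 \<union> S2) (union_plan P1 P2))
       \<and> (connected_plan t S1 P1 \<and> connected_plan t S2 P2 \<longrightarrow>
           (connected_plan t (S1 \<union> S2) (union_plan P1 P2) \<longleftrightarrow> S1 \<inter> S2 \<noteq> {}))"
  using POTB_append[OF levels_within_if_plan_wf[OF wf1] levels_within_if_plan_wf[OF wf2]]
    connected_plan_append_iff[OF assms(1) levels_within_if_plan_wf[OF wf1] levels_within_if_plan_wf[OF wf2]]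
  unfolding union_plan_def by blast

end
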